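(* Let $R$ be a division ring and let $\{I_{a,b}\}_{a,b\in\mathbb{Z}_{\geq 0}}\subseteq R$ be a family of bimoments such that for every $n\geq 1$ the $n\times n$ matrix $M_n$ with entries $(M_n)_{r,s}=I_{n-r,\,s-1}$ ($1\le r,s\le n$) is invertible. Define $p_0=1$, $q_0=1$, and for $n\geq 1$ $$p_n(x)=x^n-\begin{bmatrix} I_{n,0} & \cdots & I_{n,n-1}\end{bmatrix} M_n^{-1}\begin{bmatrix} x^{n-1}\\ \vdots \\ x\\ 1\end{bmatrix},$$ $$q_n(y)=y^n-\begin{bmatrix} 1 & y & \cdots & y^{n-1}\end{bmatrix} M_n^{-1}\begin{bmatrix} I_{n-1,n}\\ \vdots\\ I_{0,n}\end{bmatrix}.$$ These are the quasideterminants $$p_n=\begin{vmatrix} I_{n,0} & \cdots & I_{n,n-1} & \boxed{x^{n}} \\ \vdots & \ddots & \vdots & \vdots \\ I_{1,0} & \cdots & I_{1,n-1} & x \\ I_{0,0} & \cdots & I_{0,n-1} & 1 \end{vmatrix},\qquad q_n=\begin{vmatrix} 1 & y & \cdots & \boxed{y^{n}} \\ I_{n-1,0} & I_{n-1,1} & \cdots & I_{n-1,n} \\ \vdots & \vdots & \ddots & \vdots \\ I_{0,0} & I_{0,1} & \cdots & I_{0,n} \end{vmatrix}.$$ Then $\{p_n\},\{q_n\}$ is a monic biorthogonal system with respect to $\{I_{a,b}\}$, i.e. $\langle p_n(x),q_m(y)\rangle=0$ for all $n\neq m$.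
   Context: Let $C$ be the center of $R$. Elements of $R[x]$ are written $\sum_i a_i x^i$ and elements of $R[y]$ are written $\sum_j y^j b_j$ with $a_i,b_j\in R$; $x$ and $y$ commute with elements of $C$. Given a family $\{I_{a,b}\}$ in $R$ (the bimoments), the pairing $\langle\cdot,\cdot\rangle:R[x]\times R[y]\to R$ is defined by $\langle \sum_i a_i x^i,\sum_j y^j b_j\rangle=\sum_{i,j} a_i I_{i,j} b_j$, so that $I_{a,b}=\langle x^a,y^b\rangle$. For a square matrix $A=(a_{k,l})$ of size $n+1$, the $(i,j)$-quasideterminant is $|A|_{i,j}=a_{i,j}-r_i\,(A^{i,j})^{-1}c_j$, where $A^{i,j}$ is $A$ with row $i$ and column $j$ removed (assumed invertible), $r_i$ is row $i$ of $A$ with the $j$th entry removed, and $c_j$ is column $j$ of $A$ with the $i$th entry removed; the boxed entry marks the position $(i,j)$. *)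

theory Defs
  imports Main
begin

text \<open>Square matrices of size n over a (possibly noncommutative) ring, represented
  as functions nat \<Rightarrow> nat \<Rightarrow> 'a with indices 0..n-1.\<close>

definition matmul :: "nat \<Rightarrow> (nat \<Rightarrow> nat \<Rightarrow> 'a::ring_1) \<Rightarrow> (nat \<Rightarrow> nat \<Rightarrow> 'a) \<Rightarrow> nat \<Rightarrow> nat \<Rightarrow> 'a" where
  "matmul n A B r s = (\<Sum>k<n. A r k * B k s)"

definition is_inverse :: "nat \<Rightarrow> (nat \<Rightarrow> nat \<Rightarrow> 'a::ring_1) \<Rightarrow> (nat \<Rightarrow> nat \<Rightarrow> 'a) \<Rightarrow> bool" where
  "is_inverse n A B \<longleftrightarrow> (\<forall>r<n. \<forall>s<n.
      matmul n A B r s = (if r = s then 1 else 0) \<and> matmul n B A r s = (if r = s then 1 else 0))"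

definition mat_invertible :: "nat \<Rightarrow> (nat \<Rightarrow> nat \<Rightarrow> 'a::ring_1) \<Rightarrow> bool" where
  "mat_invertible n A \<longleftrightarrow> (\<exists>B. is_inverse n A B)"

definition mat_inv :: "nat \<Rightarrow> (nat \<Rightarrow> nat \<Rightarrow> 'a::ring_1) \<Rightarrow> nat \<Rightarrow> nat \<Rightarrow> 'a" where
  "mat_inv n A = (SOME B. is_inverse n A B)"

text \<open>The moment matrix M_n, 0-based: (M_n)_{r,s} = I_{n-1-r, s} for r,s < n
  (i.e. the paper's (M_n)_{r',s'} = I_{n-r', s'-1} with r' = r+1, s' = s+1).\<close>

definition moment_mat :: "(nat \<Rightarrow> nat \<Rightarrow> 'a) \<Rightarrow> nat \<Rightarrow> nat \<Rightarrow> nat \<Rightarrow> 'a" where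
  "moment_mat I n r s = I (n - 1 - r) s"

text \<open>Polynomials in R[x] (left coefficients, sum a_i x^i) and R[y] (right coefficients,
  sum y^j b_j) are represented by their coefficient functions nat \<Rightarrow> 'a.\<close>

definition pairing :: "(nat \<Rightarrow> nat \<Rightarrow> 'a::ring_1) \<Rightarrow> (nat \<Rightarrow> 'a) \<Rightarrow> (nat \<Rightarrow> 'a) \<Rightarrow> 'a" where
  "pairing I a b = (\<Sum>i\<in>{i. a i \<noteq> 0}. \<Sum>j\<in>{j. b j \<noteq> 0}. a i * I i j * b j)"

text \<open>p_n(x) = x^n - [I_{n,0} .. I_{n,n-1}] M_n^{-1} [x^{n-1}, ..., x, 1]^T;
  the coefficient of x^k (k<n) is - sum_r I_{n,r} (M_n^{-1})_{r, n-1-k}.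
  For n = 0 this gives p_0 = 1.\<close>

definition p_poly :: "(nat \<Rightarrow> nat \<Rightarrow> 'a::division_ring) \<Rightarrow> nat \<Rightarrow> nat \<Rightarrow> 'a" where
  "p_poly I n k = (if k = n then 1
      else if k < n then - (\<Sum>r<n. I n r * mat_inv n (moment_mat I n) r (n - 1 - k))
      else 0)"

text \<open>q_n(y) = y^n - [1, y, ..., y^{n-1}] M_n^{-1} [I_{n-1,n}, ..., I_{0,n}]^T;
  the (right) coefficient of y^k (k<n) is - sum_s (M_n^{-1})_{k,s} I_{n-1-s,n}.
  For n = 0 this gives q_0 = 1.\<close>

definition q_poly :: "(nat \<Rightarrow> nat \<Rightarrow> 'a::division_ring) \<Rightarrow> nat \<Rightarrow> nat \<Rightarrow> 'a" where
  "q_poly I n k = (if k = n then 1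
      else if k < n then - (\<Sum>s<n. mat_inv n (moment_mat I n) k s * I (n - 1 - s) n)
      else 0)"

end

theory Submission
  imports Defs
begin

text \<open>Below its leading term, the coefficient row of p_n is -[I_{n,0} .. I_{n,n-1}] M_n^{-1}
  read in reverse order, while the rows of M_n are the moments of x^{n-1}, .., 1. Hence
  <p_n, y^j> = I_{n,j} - [I_{n,0} .. I_{n,n-1}] M_n^{-1} M_n e_j = 0 for j < n, and symmetrically
  <x^i, q_m> = 0 for i < m. For n \<noteq> m, expanding <p_n, q_m> along the polynomial of smaller
  degree leaves only such terms.\<close>

lemma pairing_eq_sum_atMost:
  fixes I :: "nat \<Rightarrow> nat \<Rightarrow> 'a::ring_1"
  assumes a: "\<And>i. i > N \<Longrightarrow> a i = 0" and b: "\<And>j. j > M \<Longrightarrow> b j = 0"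
  shows "pairing I a b = (\<Sum>i\<le>N. \<Sum>j\<le>M. a i * I i j * b j)"
proof -
  have supp_a: "{i. a i \<noteq> 0} \<subseteq> {..N}" and supp_b: "{j. b j \<noteq> 0} \<subseteq> {..M}"
    using a b by (auto simp: not_less[symmetric])
  have "pairing I a b = (\<Sum>i\<in>{i. a i \<noteq> 0}. \<Sum>j\<le>M. a i * I i j * b j)"
    unfolding pairing_def
    by (intro sum.cong refl sum.mono_neutral_left) (use supp_b in auto)
  also have "\<dots> = (\<Sum>i\<le>N. \<Sum>j\<le>M. a i * I i j * b j)"
    by (rule sum.mono_neutral_left) (use supp_a in auto)
  finally show ?thesis .
qed

lemma is_inverse_mat_inv:
  assumes "mat_invertible n A"
  shows "is_inverse n A (mat_inv n A)"
  using assms unfolding mat_invertible_def mat_inv_def by (rule someI_ex)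

lemma matmul_mat_inv_left:
  assumes "mat_invertible n A" "r < n" "s < n"
  shows "matmul n (mat_inv n A) A r s = (if r = s then 1 else 0)"
  using is_inverse_mat_inv[OF assms(1)] assms(2,3) unfolding is_inverse_def by blast

lemma matmul_mat_inv_right:
  assumes "mat_invertible n A" "r < n" "s < n"
  shows "matmul n A (mat_inv n A) r s = (if r = s then 1 else 0)"
  using is_inverse_mat_inv[OF assms(1)] assms(2,3) unfolding is_inverse_def by blast

lemma p_poly_eq_0: "k > n \<Longrightarrow> p_poly I n k = 0"
  by (simp add: p_poly_def)

lemma q_poly_eq_0: "k > n \<Longrightarrow> q_poly I n k = 0"
  by (simp add: q_poly_def)

lemma p_poly_moment_eq_0:
  fixes I :: "nat \<Rightarrow> nat \<Rightarrow> 'a::division_ring"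
  assumes inv: "mat_invertible n (moment_mat I n)" and j: "j < n"
  shows "(\<Sum>i\<le>n. p_poly I n i * I i j) = 0"
proof -
  define B where "B = mat_inv n (moment_mat I n)"
  have B_times_M: "(\<Sum>i<n. B r (n - 1 - i) * I i j) = (if r = j then 1 else 0)"
    if r: "r < n" for r
  proof -
    have "(\<Sum>i<n. B r (n - 1 - i) * I i j) = (\<Sum>t<n. B r t * I (n - 1 - t) j)"
      by (rule sum.reindex_bij_witness[where i = "\<lambda>t. n - 1 - t" and j = "\<lambda>i. n - 1 - i"])
        auto
    also have "\<dots> = matmul n B (moment_mat I n) r j"
      by (simp add: matmul_def moment_mat_def)
    finally show ?thesis
      using matmul_mat_inv_left[OF inv r j] by (simp add: B_def)
  qed
  have "(\<Sum>i<n. p_poly I n i * I i j) = - (\<Sum>i<n. \<Sum>r<n. I n r * (B r (n - 1 - i) * I i j))"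
    by (simp add: p_poly_def B_def sum_distrib_right mult.assoc sum_negf)
  also have "\<dots> = - (\<Sum>r<n. I n r * (\<Sum>i<n. B r (n - 1 - i) * I i j))"
    by (subst sum.swap) (simp add: sum_distrib_left)
  also have "\<dots> = - (\<Sum>r<n. if r = j then I n r else 0)"
    by (intro arg_cong[where f = uminus] sum.cong refl) (subst B_times_M, auto)
  also have "\<dots> = - I n j"
    using j by (simp add: sum.delta)
  finally show ?thesis
    by (simp add: lessThan_Suc_atMost[symmetric] p_poly_def)
qed

lemma q_poly_moment_eq_0:
  fixes I :: "nat \<Rightarrow> nat \<Rightarrow> 'a::division_ring"
  assumes inv: "mat_invertible m (moment_mat I m)" and i: "i < m"
  shows "(\<Sum>k\<le>m. I i k * q_poly I m k) = 0"
proof -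
  define B where "B = mat_inv m (moment_mat I m)"
  have M_times_B: "(\<Sum>k<m. I i k * B k s) = (if s = m - 1 - i then 1 else 0)"
    if s: "s < m" for s
  proof -
    have "(\<Sum>k<m. I i k * B k s) = matmul m (moment_mat I m) B (m - 1 - i) s"
      using i by (simp add: matmul_def moment_mat_def)
    then show ?thesis
      using matmul_mat_inv_right[OF inv _ s, of "m - 1 - i"] i by (auto simp: B_def)
  qed
  have "(\<Sum>k<m. I i k * q_poly I m k) = - (\<Sum>k<m. \<Sum>s<m. I i k * B k s * I (m - 1 - s) m)"
    by (simp add: q_poly_def B_def sum_distrib_left mult.assoc sum_negf)
  also have "\<dots> = - (\<Sum>s<m. (\<Sum>k<m. I i k * B k s) * I (m - 1 - s) m)"
    by (subst sum.swap) (simp add: sum_distrib_right)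
  also have "\<dots> = - (\<Sum>s<m. if s = m - 1 - i then I (m - 1 - s) m else 0)"
    by (intro arg_cong[where f = uminus] sum.cong refl) (subst M_times_B, auto)
  also have "\<dots> = - I i m"
    using i by (simp add: sum.delta)
  finally show ?thesis
    by (simp add: lessThan_Suc_atMost[symmetric] q_poly_def)
qed

theorem mainTheorem1:
  fixes I :: "nat \<Rightarrow> nat \<Rightarrow> 'a::division_ring"
  assumes "\<And>n. n \<ge> 1 \<Longrightarrow> mat_invertible n (moment_mat I n)"
  shows "\<forall>n m. n \<noteq> m \<longrightarrow> pairing I (p_poly I n) (q_poly I m) = 0"
proof (intro allI impI)
  fix n m :: nat assume "n \<noteq> m"
  have "pairing I (p_poly I n) (q_poly I m)
      = (\<Sum>i\<le>n. \<Sum>j\<le>m. p_poly I n i * I i j * q_poly I m j)"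
    by (rule pairing_eq_sum_atMost) (auto simp: p_poly_eq_0 q_poly_eq_0)
  also have "\<dots> = 0"
  proof (cases "m < n")
    case True
    have "(\<Sum>i\<le>n. \<Sum>j\<le>m. p_poly I n i * I i j * q_poly I m j)
        = (\<Sum>j\<le>m. (\<Sum>i\<le>n. p_poly I n i * I i j) * q_poly I m j)"
      by (subst sum.swap) (simp add: sum_distrib_right)
    then show ?thesis
      using p_poly_moment_eq_0[OF assms] True by simp
  next
    case False
    with \<open>n \<noteq> m\<close> have "n < m" by simp
    have "(\<Sum>i\<le>n. \<Sum>j\<le>m. p_poly I n i * I i j * q_poly I m j)
        = (\<Sum>i\<le>n. p_poly I n i * (\<Sum>j\<le>m. I i j * q_poly I m j))"
      by (simp add: sum_distrib_left mult.assoc)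
    then show ?thesis
      using q_poly_moment_eq_0[OF assms] \<open>n < m\<close> by simp
  qed
  finally show "pairing I (p_poly I n) (q_poly I m) = 0" .
qed

end
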